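(* Let $x_0\in\mathbb{R}^2$, $r_0>0$ and $0<\varepsilon_0<1/100$, and let $K$ be a relatively closed subset of $B(x_0,r_0)$ containing $x_0$. Assume that $\beta^{\rm bil}_K(x,r)\le\varepsilon_0$ for all $x\in K\cap B(x_0,r_0/2)$ and all $0<r\le r_0/2$. Then $K$ separates $B(x_0,r_0/10)$.
   Context: $B(x,r)$ is the open ball. For a set $F$ and $x\in F$: flatness $\beta_F(x,r)=r^{-1}\inf_\ell\sup_{y\in F\cap B(x,r)}\mathrm{dist}(y,\ell)$ and bilateral flatness $\beta^{\rm bil}_F(x,r)=r^{-1}\inf_\ell\max\{\sup_{y\in F\cap B(x,r)}\mathrm{dist}(y,\ell),\sup_{y\in\ell\cap B(x,r)}\mathrm{dist}(y,F)\}$, infima over lines $\ell$ through $x$. With $\nu(x,r)$ a unit normal of a line attaining the infimum in $\beta_F(x,r)$ and $D^\pm_t(x,r)=\{z\in B(x,r):\pm(z-x)\cdot\nu(x,r)>t\}$, $F$ separates $B(x,r)$ if $\beta:=\beta_F(x,r)\le1/2$ and $D^+_{\beta r}(x,r)$, $D^-_{\beta r}(x,r)$ lie in distinct connected components of $B(x,r)\setminus F$. *)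

theory Defs
  imports "HOL-Analysis.Analysis"
begin

type_synonym pt = "real ^ 2"

definition line_normal :: "pt \<Rightarrow> pt \<Rightarrow> pt set" where
  "line_normal x n = {y. (y - x) \<bullet> n = 0}"

definition lines_through :: "pt \<Rightarrow> pt set set" where
  "lines_through x = {line_normal x n | n. norm n = 1}"

definition dev :: "pt set \<Rightarrow> pt \<Rightarrow> real \<Rightarrow> pt set \<Rightarrow> real" where
  "dev F x r l = (SUP y \<in> F \<inter> ball x r. infdist y l)"

definition beta :: "pt set \<Rightarrow> pt \<Rightarrow> real \<Rightarrow> real" where
  "beta F x r = (INF l \<in> lines_through x. dev F x r l) / r"

definition beta_bil :: "pt set \<Rightarrow> pt \<Rightarrow> real \<Rightarrow> real" where
  "beta_bil F x r = (INF l \<in> lines_through x.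
      max (SUP y \<in> F \<inter> ball x r. infdist y l) (SUP y \<in> l \<inter> ball x r. infdist y F)) / r"

definition Dplus :: "pt \<Rightarrow> real \<Rightarrow> pt \<Rightarrow> real \<Rightarrow> pt set" where
  "Dplus x r n t = {z \<in> ball x r. (z - x) \<bullet> n > t}"

definition Dminus :: "pt \<Rightarrow> real \<Rightarrow> pt \<Rightarrow> real \<Rightarrow> pt set" where
  "Dminus x r n t = {z \<in> ball x r. - ((z - x) \<bullet> n) > t}"

definition separates :: "pt set \<Rightarrow> pt \<Rightarrow> real \<Rightarrow> bool" where
  "separates F x r \<longleftrightarrow> beta F x r \<le> 1/2 \<and>
     (\<forall>n. norm n = 1 \<and> dev F x r (line_normal x n) / r = beta F x r \<longrightarrow>
        (\<exists>p q. Dplus x r n (beta F x r * r) \<subseteq> connected_component_set (ball x r - F) p \<and>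
               Dminus x r n (beta F x r * r) \<subseteq> connected_component_set (ball x r - F) q \<and>
               connected_component_set (ball x r - F) p \<noteq> connected_component_set (ball x r - F) q))"

end

(*
  Put r = r0/10 and let n be a unit normal of an optimal line for beta K x0 r. As beta < 1/100,
  K meets B(x0,r) only in a thin slab around that line, so each of D+ and D- lies in a single
  component of B(x0,r) - K, and it suffices to show that no path gamma in B(x0,r) - K joins
  x0 + (r/2) n to x0 - (r/2) n.

  Bilateral flatness at all points and scales lets one insert a point of K near the midpoint of
  any two nearby points of K; iterating, K contains arbitrarily fine chains between two of its
  points lying far to the left and to the right of x0 (found on the approximating line at scale
  3r). The polygonal path through such a chain, prolonged along the line, crosses the box
  [-3r,3r] x [-r,r] (in coordinates along and across the line) from left to right while staying
  arbitrarily close to K; gamma, prolonged across the line, crosses it from bottom to top at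
  positive distance from K. By Fashoda's theorem the two crossings meet, which is impossible.
*)
theory Submission
  imports Defs
begin

definition perp :: "pt \<Rightarrow> pt" where
  "perp n = vector [- (n$2), n$1]"

lemma inner_pt: "(x::pt) \<bullet> y = x$1 * y$1 + x$2 * y$2"
  by (simp add: inner_vec_def sum_2)

lemma perp_inner_self [simp]: "perp n \<bullet> n = 0"
  by (simp add: perp_def inner_pt vector_2)

lemma norm_perp [simp]: "norm (perp n) = norm n"
  by (simp add: norm_eq_sqrt_inner inner_pt perp_def vector_2 algebra_simps)

lemma perp_decomposition:
  assumes "norm n = 1"
  shows "w = (w \<bullet> perp n) *\<^sub>R perp n + (w \<bullet> n) *\<^sub>R n"
proof -
  have n: "n$1 * n$1 + n$2 * n$2 = 1"
    using assms by (simp add: norm_eq_1 inner_pt)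
  have "w$i = n$1 * (n$1 * w$i) + n$2 * (n$2 * w$i)" for i
    using n by algebra
  from this[of 1] this[of 2] show ?thesis
    unfolding vec_eq_iff forall_2 by (simp add: perp_def inner_pt vector_2 algebra_simps)
qed

lemma abs_inner_unit_le: "norm n = 1 \<Longrightarrow> \<bar>x \<bullet> n\<bar> \<le> norm x"
  using Cauchy_Schwarz_ineq2[of x n] by simp

lemma infdist_line_normal:
  assumes "norm n = 1"
  shows "infdist y (line_normal x n) = \<bar>(y - x) \<bullet> n\<bar>"
proof (rule antisym)
  let ?p = "y - ((y - x) \<bullet> n) *\<^sub>R n"
  have "?p \<in> line_normal x n"
    using assms by (simp add: line_normal_def inner_diff_left algebra_simps norm_eq_1 inner_commute)
  then have "infdist y (line_normal x n) \<le> dist y ?p"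
    by (rule infdist_le)
  then show "infdist y (line_normal x n) \<le> \<bar>(y - x) \<bullet> n\<bar>"
    using assms by (simp add: dist_norm)
next
  have "x \<in> line_normal x n"
    by (simp add: line_normal_def)
  then have ne: "line_normal x n \<noteq> {}"
    by blast
  show "\<bar>(y - x) \<bullet> n\<bar> \<le> infdist y (line_normal x n)"
    unfolding infdist_notempty[OF ne]
  proof (rule cINF_greatest[OF ne])
    fix z assume "z \<in> line_normal x n"
    then have "(y - x) \<bullet> n = (y - z) \<bullet> n"
      by (simp add: line_normal_def inner_diff_left)
    also have "\<bar>\<dots>\<bar> \<le> norm (y - z) * norm n"
      by (rule Cauchy_Schwarz_ineq2)
    finally show "\<bar>(y - x) \<bullet> n\<bar> \<le> dist y z"
      using assms by (simp add: dist_norm)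
  qed
qed

lemma infdist_less_imp_dist_less:
  assumes "infdist y A < d" "A \<noteq> {}"
  obtains a where "a \<in> A" "dist y a < d"
proof -
  have "bdd_below ((\<lambda>a. dist y a) ` A)"
    by (rule bdd_belowI[of _ 0]) auto
  then show ?thesis
    using assms that by (auto simp: infdist_notempty cINF_less_iff)
qed

lemma lines_through_nonempty: "lines_through x \<noteq> {}"
  unfolding lines_through_def by (auto intro: exI[of _ "axis 1 1"])

lemma center_in_line_through: "l \<in> lines_through x \<Longrightarrow> x \<in> l"
  by (auto simp: lines_through_def line_normal_def)

lemma bdd_above_infdist_ball:
  assumes "x \<in> A"
  shows "bdd_above ((\<lambda>y. infdist y A) ` (S \<inter> ball x r))"
proof (rule bdd_aboveI)
  fix d assume "d \<in> (\<lambda>y. infdist y A) ` (S \<inter> ball x r)"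
  then obtain y where "y \<in> ball x r" "d = infdist y A"
    by blast
  then show "d \<le> r"
    using infdist_le[OF assms, of y] by (simp add: dist_commute)
qed

lemma infdist_le_dev:
  assumes "x \<in> l" "y \<in> F \<inter> ball x r"
  shows "infdist y l \<le> dev F x r l"
  unfolding dev_def by (rule cSUP_upper[OF assms(2) bdd_above_infdist_ball[OF assms(1)]])

lemma dev_nonneg:
  assumes "x \<in> F" "x \<in> l" "0 < r"
  shows "0 \<le> dev F x r l"
  using order_trans[OF infdist_nonneg infdist_le_dev[OF assms(2), of x F r]] assms(1,3) by simp

lemma dist_line_le_dev:
  assumes "norm n = 1" "y \<in> F \<inter> ball x r"
  shows "\<bar>(y - x) \<bullet> n\<bar> \<le> dev F x r (line_normal x n)"
  using infdist_le_dev[OF _ assms(2), of "line_normal x n"] infdist_line_normal[OF assms(1)]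
  by (simp add: line_normal_def)

lemma beta_le_beta_bil:
  assumes "x \<in> K" "0 < r"
  shows "beta K x r \<le> beta_bil K x r"
proof -
  have "(INF l \<in> lines_through x. dev K x r l) \<le>
      (INF l \<in> lines_through x.
         max (dev K x r l) (SUP y \<in> l \<inter> ball x r. infdist y K))"
    using assms by (intro cINF_mono[OF lines_through_nonempty] bdd_belowI[of _ 0])
      (force intro: dev_nonneg center_in_line_through)+
  then show ?thesis
    unfolding beta_def beta_bil_def dev_def using assms(2) by (simp add: divide_right_mono)
qed

definition bilateral_line :: "pt set \<Rightarrow> pt \<Rightarrow> real \<Rightarrow> real \<Rightarrow> pt \<Rightarrow> bool" where
  "bilateral_line K x \<rho> \<eta> n \<longleftrightarrow> norm n = 1 \<and>
     (\<forall>y \<in> K \<inter> ball x \<rho>. \<bar>(y - x) \<bullet> n\<bar> < \<eta> * \<rho>) \<and>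
     (\<forall>w \<in> ball x \<rho>. (w - x) \<bullet> n = 0 \<longrightarrow> (\<exists>k \<in> K. dist w k < \<eta> * \<rho>))"

lemma beta_bil_less_imp_bilateral_line:
  assumes "x \<in> K" "0 < \<rho>" "beta_bil K x \<rho> < \<eta>"
  obtains n where "bilateral_line K x \<rho> \<eta> n"
proof -
  define G where "G l = max (dev K x \<rho> l) (SUP y \<in> l \<inter> ball x \<rho>. infdist y K)" for l
  have "(INF l \<in> lines_through x. G l) < \<eta> * \<rho>"
    using assms(2,3) by (simp add: beta_bil_def G_def dev_def divide_less_eq)
  moreover have "bdd_below (G ` lines_through x)"
    using assms(1,2) dev_nonneg[OF _ center_in_line_through]
    by (intro bdd_belowI[of _ 0]) (force simp: G_def intro: max.coboundedI1)
  ultimately obtain l where l: "l \<in> lines_through x" "G l < \<eta> * \<rho>"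
    by (auto simp: cINF_less_iff[OF lines_through_nonempty])
  then obtain n where n: "norm n = 1" "l = line_normal x n"
    by (auto simp: lines_through_def)
  have "\<bar>(y - x) \<bullet> n\<bar> < \<eta> * \<rho>" if "y \<in> K \<inter> ball x \<rho>" for y
    using dist_line_le_dev[OF n(1) that] l(2) n(2) by (simp add: G_def)
  moreover have "\<exists>k \<in> K. dist w k < \<eta> * \<rho>" if "w \<in> ball x \<rho>" "(w - x) \<bullet> n = 0" for w
  proof -
    have "w \<in> l \<inter> ball x \<rho>"
      using that n(2) by (simp add: line_normal_def)
    then have "infdist w K \<le> (SUP y \<in> l \<inter> ball x \<rho>. infdist y K)"
      by (rule cSUP_upper[OF _ bdd_above_infdist_ball[OF assms(1)]])
    also have "\<dots> < \<eta> * \<rho>"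
      using l(2) by (simp add: G_def)
    finally show ?thesis
      using assms(1) by (auto elim: infdist_less_imp_dist_less)
  qed
  ultimately show ?thesis
    using n(1) by (intro that[of n]) (auto simp: bilateral_line_def)
qed

lemma bilateral_line_norm: "bilateral_line K x \<rho> \<eta> n \<Longrightarrow> norm n = 1"
  by (simp add: bilateral_line_def)

lemma bilateral_line_near_point:
  assumes "bilateral_line K x \<rho> \<eta> m" "\<bar>s\<bar> < \<rho>"
  obtains k where "k \<in> K" "dist (x + s *\<^sub>R perp m) k < \<eta> * \<rho>"
proof -
  have "x + s *\<^sub>R perp m \<in> ball x \<rho>"
    using assms bilateral_line_norm[OF assms(1)] by (simp add: dist_norm)
  then show ?thesis
    using assms(1) that by (force simp: bilateral_line_def)
qed

fun polygonal_path :: "'a::real_normed_vector list \<Rightarrow> real \<Rightarrow> 'a" where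
  "polygonal_path [] = linepath 0 0" \<comment> \<open>junk\<close>
| "polygonal_path [a] = linepath a a"
| "polygonal_path (a # b # xs) = linepath a b +++ polygonal_path (b # xs)"

lemma pathstart_polygonal_path [simp]: "pathstart (polygonal_path (a # xs)) = a"
  by (cases xs) simp_all

lemma pathfinish_polygonal_path: "xs \<noteq> [] \<Longrightarrow> pathfinish (polygonal_path xs) = last xs"
  by (induction xs rule: polygonal_path.induct) simp_all

lemma path_polygonal_path: "path (polygonal_path xs)"
  by (induction xs rule: polygonal_path.induct) (simp_all add: path_const)

lemma path_image_polygonal_path_subset_hull:
  "xs \<noteq> [] \<Longrightarrow> path_image (polygonal_path xs) \<subseteq> convex hull (set xs)"
proof (induction xs rule: polygonal_path.induct)
  case (3 a b xs)
  have "closed_segment a b \<subseteq> convex hull (set (a # b # xs))"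
    by (intro closed_segment_subset) (auto intro: hull_inc)
  moreover have "convex hull (set (b # xs)) \<subseteq> convex hull (set (a # b # xs))"
    by (intro hull_mono) auto
  ultimately show ?case
    using 3 by (auto simp: path_image_join)
qed (simp_all add: path_image_const)

lemma polygonal_path_near_vertex:
  fixes z :: "'a::euclidean_space"
  assumes "successively (\<lambda>a b. dist a b \<le> t) xs" "0 \<le> t" "xs \<noteq> []"
    and "z \<in> path_image (polygonal_path xs)"
  shows "\<exists>a \<in> set xs. dist z a \<le> t"
  using assms
proof (induction xs rule: polygonal_path.induct)
  case (2 a)
  then show ?case
    by (simp add: path_image_const)
next
  case (3 a b xs)
  show ?case
  proof (cases "z \<in> closed_segment a b")
    case True
    then have "dist z a \<le> t"
      using dist_in_closed_segment[of z a b] "3.prems"(1) by simp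
    then show ?thesis
      by simp
  next
    case False
    then have "z \<in> path_image (polygonal_path (b # xs))"
      using "3.prems"(4) by (simp add: path_image_join)
    then show ?thesis
      using "3.IH" "3.prems"(1,2) by auto
  qed
qed simp

lemma successively_refine:
  assumes insert: "\<And>a b. a \<in> P \<Longrightarrow> b \<in> P \<Longrightarrow> R a b \<Longrightarrow> \<exists>k \<in> Q. R' a k \<and> R' k b"
    and "P \<subseteq> Q" "successively R xs" "set xs \<subseteq> P" "xs \<noteq> []"
  shows "\<exists>ys. ys \<noteq> [] \<and> hd ys = hd xs \<and> last ys = last xs \<and> successively R' ys \<and> set ys \<subseteq> Q"
  using assms(3-5)
proof (induction xs rule: induct_list012)
  case (2 a)
  then show ?case
    using \<open>P \<subseteq> Q\<close> by (intro exI[of _ "[a]"]) auto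
next
  case (3 a b xs)
  obtain ys where ys: "ys \<noteq> []" "hd ys = b" "last ys = last (b # xs)"
      "successively R' ys" "set ys \<subseteq> Q"
    using "3.IH"(2) "3.prems" by auto
  obtain k where k: "k \<in> Q" "R' a k" "R' k b"
    using insert[of a b] "3.prems" by auto
  have "successively R' (a # k # ys)"
    using ys k by (cases ys) simp_all
  moreover have "set (a # k # ys) \<subseteq> Q"
    using ys(5) k(1) "3.prems"(2) \<open>P \<subseteq> Q\<close> by auto
  ultimately show ?case
    using ys(1,3) by (intro exI[of _ "a # k # ys"]) simp
qed simp

text \<open>The slack t/8 in the radius pays for the displacement (less than 3t/100) of the inserted
  point from the midpoint, so the invariant survives the contraction of t to 3t/5.\<close>

lemma flat_midpoint_insertion:
  assumes flat: "\<And>x \<rho>. x \<in> K \<inter> ball x0 h \<Longrightarrow> 0 < \<rho> \<Longrightarrow> \<rho> \<le> h \<Longrightarrow> beta_bil K x \<rho> < 1/100"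
    and a: "a \<in> K \<inter> ball x0 (R - t/8)" and b: "b \<in> K \<inter> ball x0 (R - t/8)"
    and "dist a b \<le> t" "0 < t" "2 * t \<le> h" "R \<le> h"
  shows "\<exists>k \<in> K \<inter> ball x0 (R - (3*t/5)/8). dist a k \<le> 3*t/5 \<and> dist k b \<le> 3*t/5"
proof -
  have "beta_bil K a (2*t) < 1/100"
    using flat a assms(5-7) by auto
  then obtain m where m: "bilateral_line K a (2*t) (1/100) m"
    by (rule beta_bil_less_imp_bilateral_line[rotated 2]) (use a assms(5) in auto)
  note m1 = bilateral_line_norm[OF m]
  define c where "c = midpoint a b"
  define c' where "c' = c - ((c - a) \<bullet> m) *\<^sub>R m"
  have "b \<in> K \<inter> ball a (2*t)"
    using b assms(4,5) by (auto simp: dist_commute)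
  then have "\<bar>(b - a) \<bullet> m\<bar> < t/50"
    using m by (auto simp: bilateral_line_def)
  moreover have "c - a = (1/2) *\<^sub>R (b - a)"
    by (simp add: c_def midpoint_def vec_eq_iff field_simps)
  ultimately have cm: "\<bar>(c - a) \<bullet> m\<bar> < t/100"
    by simp
  have cc': "dist c c' < t/100"
    using cm m1 by (simp add: c'_def dist_norm)
  have ac: "dist a c \<le> t/2" and cb: "dist c b \<le> t/2"
    using assms(4) by (simp_all add: c_def dist_midpoint)
  have "(c' - a) \<bullet> m = 0"
    using m1 by (simp add: c'_def inner_diff_left algebra_simps norm_eq_1)
  moreover have "c' \<in> ball a (2*t)"
    using dist_triangle[of a c' c] ac cc' assms(5) by (simp add: dist_commute)
  ultimately obtain k where k: "k \<in> K" "dist c' k < t/50"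
    using m by (force simp: bilateral_line_def)
  have ck: "dist c k < 3*t/100"
    using dist_triangle[of c k c'] k(2) cc' by simp
  have "closed_segment a b \<subseteq> ball x0 (R - t/8)"
    using a b by (intro closed_segment_subset) auto
  then have "c \<in> ball x0 (R - t/8)"
    using midpoint_in_closed_segment unfolding c_def by blast
  then have "k \<in> ball x0 (R - (3*t/5)/8)"
    using dist_triangle[of x0 k c] ck assms(5) by simp
  moreover have "dist a k \<le> 3*t/5" "dist k b \<le> 3*t/5"
    using dist_triangle[of a k c] dist_triangle[of k b c] ac cb ck assms(5)
    by (simp_all add: dist_commute)
  ultimately show ?thesis
    using k(1) by blast
qed

lemma flat_fine_chain:
  assumes flat: "\<And>x \<rho>. x \<in> K \<inter> ball x0 h \<Longrightarrow> 0 < \<rho> \<Longrightarrow> \<rho> \<le> h \<Longrightarrow> beta_bil K x \<rho> < 1/100"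
    and "0 < t" "2 * t \<le> h" "R \<le> h"
    and xs: "xs \<noteq> []" "successively (\<lambda>a b. dist a b \<le> t) xs" "set xs \<subseteq> K \<inter> ball x0 (R - t/8)"
  shows "\<exists>ys. ys \<noteq> [] \<and> hd ys = hd xs \<and> last ys = last xs \<and>
           successively (\<lambda>a b. dist a b \<le> t * (3/5)^N) ys \<and>
           set ys \<subseteq> K \<inter> ball x0 (R - t * (3/5)^N / 8)"
proof (induction N)
  case 0
  then show ?case
    using xs by auto
next
  case (Suc N)
  define \<tau> where "\<tau> = t * (3/5)^N"
  have "0 < \<tau>" "\<tau> \<le> t"
    using \<open>0 < t\<close> by (simp_all add: \<tau>_def power_le_one mult_left_le)
  obtain ys where ys: "ys \<noteq> []" "hd ys = hd xs" "last ys = last xs"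
      "successively (\<lambda>a b. dist a b \<le> \<tau>) ys" "set ys \<subseteq> K \<inter> ball x0 (R - \<tau>/8)"
    using Suc.IH unfolding \<tau>_def by blast
  have insert: "\<exists>k \<in> K \<inter> ball x0 (R - (3*\<tau>/5)/8). dist a k \<le> 3*\<tau>/5 \<and> dist k b \<le> 3*\<tau>/5"
    if "a \<in> K \<inter> ball x0 (R - \<tau>/8)" "b \<in> K \<inter> ball x0 (R - \<tau>/8)" "dist a b \<le> \<tau>" for a b
    using flat_midpoint_insertion[where h = h, OF flat that] \<open>0 < \<tau>\<close> \<open>\<tau> \<le> t\<close> assms(3,4) by auto
  have "K \<inter> ball x0 (R - \<tau>/8) \<subseteq> K \<inter> ball x0 (R - (3*\<tau>/5)/8)"
    using \<open>0 < \<tau>\<close> by auto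
  then have "\<exists>zs. zs \<noteq> [] \<and> hd zs = hd ys \<and> last zs = last ys \<and>
      successively (\<lambda>a b. dist a b \<le> 3*\<tau>/5) zs \<and> set zs \<subseteq> K \<inter> ball x0 (R - (3*\<tau>/5)/8)"
    using successively_refine[OF insert _ ys(4,5,1)] by simp
  moreover have "3*\<tau>/5 = t * (3/5)^Suc N"
    by (simp add: \<tau>_def)
  ultimately show ?case
    using ys(2,3) by metis
qed

lemma flat_near_path:
  assumes flat: "\<And>x \<rho>. x \<in> K \<inter> ball x0 h \<Longrightarrow> 0 < \<rho> \<Longrightarrow> \<rho> \<le> h \<Longrightarrow> beta_bil K x \<rho> < 1/100"
    and "0 < t" "2 * t \<le> h" "R \<le> h" "0 < \<delta>"
    and xs: "xs \<noteq> []" "successively (\<lambda>a b. dist a b \<le> t) xs" "set xs \<subseteq> K \<inter> ball x0 (R - t/8)"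
  obtains p where "path p" "pathstart p = hd xs" "pathfinish p = last xs"
    "path_image p \<subseteq> convex hull (K \<inter> ball x0 R)"
    "\<And>z. z \<in> path_image p \<Longrightarrow> \<exists>k \<in> K \<inter> ball x0 R. dist z k < \<delta>"
proof -
  obtain N where N: "(3/5::real)^N < \<delta> / t"
    using real_arch_pow_inv[of "\<delta> / t" "3/5"] assms(2,5) by auto
  define s where "s = t * (3/5)^N"
  have s: "0 \<le> s" "s < \<delta>"
    using N assms(2) by (simp_all add: s_def field_simps)
  obtain ys where ys: "ys \<noteq> []" "hd ys = hd xs" "last ys = last xs"
      "successively (\<lambda>a b. dist a b \<le> s) ys" "set ys \<subseteq> K \<inter> ball x0 (R - s/8)"
    using flat_fine_chain[OF flat assms(2-4) xs, of N] unfolding s_def by blast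
  have ysR: "set ys \<subseteq> K \<inter> ball x0 R"
    using ys(5) s(1) by auto
  show ?thesis
  proof
    show "path (polygonal_path ys)"
      by (rule path_polygonal_path)
    show "pathstart (polygonal_path ys) = hd xs"
      using ys(1,2) by (cases ys) simp_all
    show "pathfinish (polygonal_path ys) = last xs"
      using ys(1,3) by (simp add: pathfinish_polygonal_path)
    show "path_image (polygonal_path ys) \<subseteq> convex hull (K \<inter> ball x0 R)"
      using path_image_polygonal_path_subset_hull[OF ys(1)] hull_mono[OF ysR] by blast
    show "\<exists>k \<in> K \<inter> ball x0 R. dist z k < \<delta>" if "z \<in> path_image (polygonal_path ys)" for z
      using polygonal_path_near_vertex[OF ys(4) s(1) ys(1) that] ysR s(2) by force
  qed
qed

text \<open>The two lines are nearly parallel, so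
  the bilateral information at scale 3r can be read in the frame of n.\<close>

context
  fixes K :: "pt set" and x0 n m :: pt and r :: real
  assumes r: "0 < r" and n: "norm n = 1"
    and narrow: "\<And>y. y \<in> K \<inter> ball x0 r \<Longrightarrow> \<bar>(y - x0) \<bullet> n\<bar> < r/100"
    and line: "bilateral_line K x0 (3*r) (1/100) m"
begin

lemma line_direction_tilt: "\<bar>perp m \<bullet> n\<bar> < 2/45"
proof -
  define w where "w = x0 + (9*r/10) *\<^sub>R perp m"
  obtain k where k: "k \<in> K" "dist w k < 3*r/100"
    using bilateral_line_near_point[OF line, of "9*r/10"] r unfolding w_def by auto
  have "dist x0 k < r"
    using dist_triangle[of x0 k w] k(2) bilateral_line_norm[OF line] r by (simp add: w_def dist_norm)
  then have "\<bar>(k - x0) \<bullet> n\<bar> < r/100"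
    using narrow k(1) by simp
  moreover have "\<bar>(w - k) \<bullet> n\<bar> < 3*r/100"
    using abs_inner_unit_le[OF n, of "w - k"] k(2) by (simp add: dist_norm)
  moreover have "(w - x0) \<bullet> n = (k - x0) \<bullet> n + (w - k) \<bullet> n"
    by (simp add: inner_diff_left)
  ultimately have "(9*r/10) * \<bar>perp m \<bullet> n\<bar> < (9*r/10) * (2/45)"
    by (simp add: w_def abs_mult)
  then show ?thesis
    using r by simp
qed

lemma flat_strip:
  assumes "y \<in> K \<inter> ball x0 (3*r)"
  shows "\<bar>(y - x0) \<bullet> n\<bar> < r/2"
proof -
  define w where "w = y - x0"
  have "w \<bullet> n = (w \<bullet> perp m) * (perp m \<bullet> n) + (w \<bullet> m) * (m \<bullet> n)"
    using arg_cong[OF perp_decomposition[OF bilateral_line_norm[OF line], of w], of "\<lambda>v. v \<bullet> n"]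
    by (simp add: inner_add_left)
  then have "\<bar>w \<bullet> n\<bar> \<le> \<bar>w \<bullet> perp m\<bar> * \<bar>perp m \<bullet> n\<bar> + \<bar>w \<bullet> m\<bar> * \<bar>m \<bullet> n\<bar>"
    by (metis abs_mult abs_triangle_ineq)
  moreover have "\<bar>w \<bullet> perp m\<bar> * \<bar>perp m \<bullet> n\<bar> \<le> 3*r * (2/45)"
    using abs_inner_unit_le[of "perp m" w] bilateral_line_norm[OF line] line_direction_tilt assms
    by (intro mult_mono) (auto simp: w_def dist_norm norm_minus_commute)
  moreover have "\<bar>w \<bullet> m\<bar> < 3*r/100"
    using line assms by (simp add: w_def bilateral_line_def)
  then have "\<bar>w \<bullet> m\<bar> * \<bar>m \<bullet> n\<bar> \<le> 3*r/100 * 1"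
    using abs_inner_unit_le[OF n, of m] bilateral_line_norm[OF line] by (intro mult_mono) auto
  ultimately show ?thesis
    using r unfolding w_def[symmetric] by linarith
qed

lemma flat_far_points:
  obtains A B where "A \<in> K" "B \<in> K" "dist x0 A < 8*r/5" "dist x0 B < 8*r/5"
    "(A - x0) \<bullet> perp n < - r" "r < (B - x0) \<bullet> perp n"
proof -
  define c where "c = perp m \<bullet> perp n"
  have "1 \<le> \<bar>c\<bar> + \<bar>perp m \<bullet> n\<bar>"
    using norm_triangle_ineq[of "c *\<^sub>R perp n" "(perp m \<bullet> n) *\<^sub>R n"] n bilateral_line_norm[OF line]
      perp_decomposition[OF n, of "perp m"]
    by (simp add: c_def)
  then have c: "43/45 < \<bar>c\<bar>"
    using line_direction_tilt by linarith
  define X where "X = (3*r/2) * \<bar>c\<bar>"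
  have X: "43*r/30 < X"
    using c r by (simp add: X_def)
  have far: "\<exists>k \<in> K. dist x0 k < 8*r/5 \<and> \<bar>(k - x0) \<bullet> perp n - \<sigma> * X\<bar> < 3*r/100"
    if \<sigma>: "\<bar>\<sigma>\<bar> = 1" for \<sigma>
  proof -
    define s where "s = \<sigma> * (3*r/2) * sgn c"
    have s: "\<bar>s\<bar> = 3*r/2" "s * c = \<sigma> * X"
      using \<sigma> c r by (auto simp: s_def X_def abs_mult sgn_if)
    define w where "w = x0 + s *\<^sub>R perp m"
    obtain k where k: "k \<in> K" "dist w k < 3*r/100"
      using bilateral_line_near_point[OF line, of s] s r unfolding w_def by auto
    have "dist x0 k < 8*r/5"
      using dist_triangle[of x0 k w] k(2) bilateral_line_norm[OF line] s by (simp add: w_def dist_norm)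
    moreover have "(k - x0) \<bullet> perp n - s * c = (k - w) \<bullet> perp n"
      by (simp add: w_def c_def inner_diff_left algebra_simps)
    moreover have "\<bar>(k - w) \<bullet> perp n\<bar> < 3*r/100"
      using abs_inner_unit_le[of "perp n" "k - w"] n k(2) by (simp add: dist_norm norm_minus_commute)
    ultimately show ?thesis
      using k(1) s(2) by auto
  qed
  obtain A B where "A \<in> K" "dist x0 A < 8*r/5" and A: "\<bar>(A - x0) \<bullet> perp n + X\<bar> < 3*r/100"
    and "B \<in> K" "dist x0 B < 8*r/5" and B: "\<bar>(B - x0) \<bullet> perp n - X\<bar> < 3*r/100"
    using far[of "-1"] far[of 1] by auto
  moreover have "(A - x0) \<bullet> perp n < - r" "r < (B - x0) \<bullet> perp n"
    using A B X unfolding abs_less_iff by linarith+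
  ultimately show ?thesis
    using that by blast
qed

end

lemma inner_closed_segment_between:
  assumes "z \<in> closed_segment a b"
  shows "min ((a - c) \<bullet> w) ((b - c) \<bullet> w) \<le> (z - c) \<bullet> w \<and> (z - c) \<bullet> w \<le> max ((a - c) \<bullet> w) ((b - c) \<bullet> w)"
proof -
  obtain u where u: "0 \<le> u" "u \<le> 1" "z = (1 - u) *\<^sub>R a + u *\<^sub>R b"
    using assms by (auto simp: in_segment)
  have "(z - c) \<bullet> w = (1 - u) * ((a - c) \<bullet> w) + u * ((b - c) \<bullet> w)"
    unfolding u(3) by (simp add: inner_diff_left inner_add_left algebra_simps)
  then have "(z - c) \<bullet> w \<in> closed_segment ((a - c) \<bullet> w) ((b - c) \<bullet> w)"
    using u(1,2) by (auto simp: in_segment)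
  then show ?thesis
    by (auto simp: closed_segment_eq_real_ivl split: if_splits)
qed

lemma fashoda_frame:
  fixes x0 n :: pt
  assumes n: "norm n = 1" and "path f" "path g"
    and box: "\<And>z. z \<in> path_image f \<union> path_image g \<Longrightarrow>
      \<bar>(z - x0) \<bullet> perp n\<bar> \<le> a \<and> \<bar>(z - x0) \<bullet> n\<bar> \<le> b"
    and "(pathstart f - x0) \<bullet> perp n = - a" "(pathfinish f - x0) \<bullet> perp n = a"
    and "(pathstart g - x0) \<bullet> n = - b" "(pathfinish g - x0) \<bullet> n = b"
  obtains z where "z \<in> path_image f" "z \<in> path_image g"
proof -
  define \<Phi> :: "pt \<Rightarrow> pt" where
    "\<Phi> z = ((z - x0) \<bullet> perp n) *\<^sub>R axis 1 1 + ((z - x0) \<bullet> n) *\<^sub>R axis 2 1" for z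
  have \<Phi>: "\<Phi> z $ 1 = (z - x0) \<bullet> perp n" "\<Phi> z $ 2 = (z - x0) \<bullet> n" for z
    by (simp_all add: \<Phi>_def axis_def)
  have "inj \<Phi>"
  proof (rule injI)
    fix z w assume "\<Phi> z = \<Phi> w"
    then have "(z - x0) \<bullet> perp n = (w - x0) \<bullet> perp n" "(z - x0) \<bullet> n = (w - x0) \<bullet> n"
      by (metis \<Phi>(1), metis \<Phi>(2))
    then have "z - x0 = w - x0"
      using perp_decomposition[OF n, of "z - x0"] perp_decomposition[OF n, of "w - x0"] by simp
    then show "z = w"
      by simp
  qed
  have "continuous_on UNIV \<Phi>"
    unfolding \<Phi>_def by (intro continuous_intros)
  then have paths: "path (\<Phi> \<circ> f)" "path (\<Phi> \<circ> g)"
    using assms(2,3) by (auto intro: path_continuous_image continuous_on_subset)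
  define lo :: pt where "lo = vector [- a, - b]"
  define hi :: pt where "hi = vector [a, b]"
  have "\<Phi> z \<in> cbox lo hi" if "z \<in> path_image f \<union> path_image g" for z
    using box[OF that] unfolding mem_box_cart forall_2 lo_def hi_def by (simp add: \<Phi> abs_le_iff)
  then have "path_image (\<Phi> \<circ> f) \<subseteq> cbox lo hi" "path_image (\<Phi> \<circ> g) \<subseteq> cbox lo hi"
    by (auto simp: path_image_compose)
  then obtain y where "y \<in> path_image (\<Phi> \<circ> f)" "y \<in> path_image (\<Phi> \<circ> g)"
    by (rule fashoda[OF paths])
      (use assms(5-8) in \<open>simp_all add: pathstart_compose pathfinish_compose \<Phi> lo_def hi_def\<close>)
  then obtain z w where "z \<in> path_image f" "w \<in> path_image g" "\<Phi> z = \<Phi> w"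
    by (auto simp: path_image_compose)
  then show ?thesis
    using \<open>inj \<Phi>\<close> that by (metis injD)
qed

lemma convex_slab: "convex {z. \<bar>(z - c) \<bullet> n\<bar> < d}"
proof -
  have "{z. \<bar>(z - c) \<bullet> n\<bar> < d} = {z. n \<bullet> z < d + n \<bullet> c} \<inter> {z. n \<bullet> z > n \<bullet> c - d}"
    by (auto simp: inner_diff_left inner_commute[of n] abs_less_iff)
  then show ?thesis
    by (simp add: convex_Int convex_halfspace_lt convex_halfspace_gt)
qed

lemma flat_horizontal_crossing:
  assumes flat: "\<And>x \<rho>. x \<in> K \<inter> ball x0 (5*r) \<Longrightarrow> 0 < \<rho> \<Longrightarrow> \<rho> \<le> 5*r \<Longrightarrow> beta_bil K x \<rho> < 1/100"
    and r: "0 < r" and n: "norm n = 1" and "x0 \<in> K"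
    and narrow: "\<And>y. y \<in> K \<inter> ball x0 r \<Longrightarrow> \<bar>(y - x0) \<bullet> n\<bar> < r/100"
    and "0 < \<delta>"
  obtains f where "path f" "(pathstart f - x0) \<bullet> perp n = - 3*r" "(pathfinish f - x0) \<bullet> perp n = 3*r"
    "\<And>z. z \<in> path_image f \<Longrightarrow> \<bar>(z - x0) \<bullet> perp n\<bar> \<le> 3*r \<and> \<bar>(z - x0) \<bullet> n\<bar> < r/2 \<and>
        (r < \<bar>(z - x0) \<bullet> perp n\<bar> \<or> (\<exists>k \<in> K \<inter> ball x0 (9*r/5). dist z k < \<delta>))"
proof -
  define u where "u z = (z - x0) \<bullet> perp n" for z
  define v where "v z = (z - x0) \<bullet> n" for z
  have u_le: "\<bar>u z\<bar> \<le> dist x0 z" for z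
    using abs_inner_unit_le[of "perp n" "z - x0"] n by (simp add: u_def dist_norm norm_minus_commute)
  obtain m where m: "bilateral_line K x0 (3*r) (1/100) m"
    using beta_bil_less_imp_bilateral_line[OF \<open>x0 \<in> K\<close>, of "3*r" "1/100"] flat[of x0 "3*r"] r \<open>x0 \<in> K\<close>
    by auto
  have strip: "\<bar>v z\<bar> < r/2" if "z \<in> K \<inter> ball x0 (3*r)" for z
    using flat_strip[OF r n narrow m that] by (simp add: v_def)
  obtain A B where AB: "A \<in> K" "B \<in> K" "dist x0 A < 8*r/5" "dist x0 B < 8*r/5"
      "u A < - r" "r < u B"
    using flat_far_points[OF r n narrow m] unfolding u_def by blast
  have chain: "[A, x0, B] \<noteq> []" "successively (\<lambda>a b. dist a b \<le> 8*r/5) [A, x0, B]"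
      "set [A, x0, B] \<subseteq> K \<inter> ball x0 (9*r/5 - (8*r/5)/8)"
    using AB r \<open>x0 \<in> K\<close> by (auto simp: dist_commute)
  obtain p where p: "path p" "pathstart p = hd [A, x0, B]" "pathfinish p = last [A, x0, B]"
      "path_image p \<subseteq> convex hull (K \<inter> ball x0 (9*r/5))"
      "\<And>z. z \<in> path_image p \<Longrightarrow> \<exists>k \<in> K \<inter> ball x0 (9*r/5). dist z k < \<delta>"
    by (rule flat_near_path[OF flat _ _ _ \<open>0 < \<delta>\<close> chain]) (use r in auto)
  have "K \<inter> ball x0 (9*r/5) \<subseteq> ball x0 (9*r/5) \<inter> {z. \<bar>v z\<bar> < r/2}"
    using strip r by auto
  have p_strip: "dist x0 z < 9*r/5 \<and> \<bar>v z\<bar> < r/2" if "z \<in> path_image p" for z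
  proof -
    have "convex hull (K \<inter> ball x0 (9*r/5)) \<subseteq> ball x0 (9*r/5) \<inter> {z. \<bar>v z\<bar> < r/2}"
      by (rule hull_minimal[OF \<open>K \<inter> ball x0 (9*r/5) \<subseteq> _\<close>])
        (unfold v_def, intro convex_Int convex_ball convex_slab)
    then show ?thesis
      using p(4) that by auto
  qed
  define A' where "A' = A - (3*r + u A) *\<^sub>R perp n"
  define B' where "B' = B + (3*r - u B) *\<^sub>R perp n"
  have uv: "u A' = - 3*r" "v A' = v A" "u B' = 3*r" "v B' = v B"
    using n norm_eq_1[of "perp n"]
    by (simp_all add: A'_def B'_def u_def v_def inner_diff_left inner_add_left norm_eq_1)
  have "- 3*r \<le> u A" "u B \<le> 3*r" "\<bar>v A\<bar> < r/2" "\<bar>v B\<bar> < r/2"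
    using u_le[of A] u_le[of B] AB strip r by auto
  moreover have "min (u a) (u b) \<le> u z \<and> u z \<le> max (u a) (u b)"
    "min (v a) (v b) \<le> v z \<and> v z \<le> max (v a) (v b)"
    if "z \<in> closed_segment a b" for z a b
    using inner_closed_segment_between[OF that] unfolding u_def v_def by blast+
  ultimately have ends: "\<bar>u z\<bar> \<le> 3*r \<and> \<bar>v z\<bar> < r/2 \<and> r < \<bar>u z\<bar>"
    if "z \<in> closed_segment A' A \<union> closed_segment B B'" for z
    using that AB(5,6) uv by (fastforce simp: min_def max_def abs_le_iff abs_less_iff)
  show ?thesis
  proof
    show "path (linepath A' A +++ p +++ linepath B B')"
      using p by simp
    show "(pathstart (linepath A' A +++ p +++ linepath B B') - x0) \<bullet> perp n = - 3*r"
         "(pathfinish (linepath A' A +++ p +++ linepath B B') - x0) \<bullet> perp n = 3*r"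
      using uv by (simp_all add: u_def)
    fix z assume "z \<in> path_image (linepath A' A +++ p +++ linepath B B')"
    then consider "z \<in> closed_segment A' A \<union> closed_segment B B'" | "z \<in> path_image p"
      using p(2,3) by (auto simp: path_image_join)
    then show "\<bar>(z - x0) \<bullet> perp n\<bar> \<le> 3*r \<and> \<bar>(z - x0) \<bullet> n\<bar> < r/2 \<and>
        (r < \<bar>(z - x0) \<bullet> perp n\<bar> \<or> (\<exists>k \<in> K \<inter> ball x0 (9*r/5). dist z k < \<delta>))"
    proof cases
      case 1
      then show ?thesis
        using ends unfolding u_def v_def by blast
    next
      case 2
      then show ?thesis
        using p_strip[OF 2] p(5)[OF 2] u_le[of z] r unfolding u_def v_def by auto
    qed
  qed
qed

lemma flat_no_crossing:
  assumes flat: "\<And>x \<rho>. x \<in> K \<inter> ball x0 (5*r) \<Longrightarrow> 0 < \<rho> \<Longrightarrow> \<rho> \<le> 5*r \<Longrightarrow> beta_bil K x \<rho> < 1/100"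
    and r: "0 < r" and n: "norm n = 1" and "x0 \<in> K"
    and dev: "dev K x0 r (line_normal x0 n) < r/100"
    and closed: "closed (K \<inter> cball x0 (2*r))"
    and \<gamma>: "path \<gamma>" "path_image \<gamma> \<subseteq> ball x0 r - K"
      "pathstart \<gamma> = x0 + (r/2) *\<^sub>R n" "pathfinish \<gamma> = x0 - (r/2) *\<^sub>R n"
  shows False
proof -
  have narrow: "\<bar>(y - x0) \<bullet> n\<bar> < r/100" if "y \<in> K \<inter> ball x0 r" for y
    using dist_line_le_dev[OF n that] dev by linarith
  define u where "u z = (z - x0) \<bullet> perp n" for z
  define v where "v z = (z - x0) \<bullet> n" for z
  have uv_axis: "u (x0 + s *\<^sub>R n) = 0" "v (x0 + s *\<^sub>R n) = s"
    "u (x0 - s *\<^sub>R n) = 0" "v (x0 - s *\<^sub>R n) = - s" for s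
    using n by (simp_all add: u_def v_def inner_commute[of n "perp n"] norm_eq_1)
  have disjoint: "path_image \<gamma> \<inter> (K \<inter> cball x0 (2*r)) = {}"
    using \<gamma>(2) by blast
  obtain \<delta> where \<delta>: "0 < \<delta>" "\<And>z k. z \<in> path_image \<gamma> \<Longrightarrow> k \<in> K \<inter> cball x0 (2*r) \<Longrightarrow> \<delta> \<le> dist z k"
    using separate_compact_closed[OF compact_path_image[OF \<gamma>(1)] closed disjoint] by blast
  obtain f where f: "path f" "u (pathstart f) = - 3*r" "u (pathfinish f) = 3*r"
      "\<And>z. z \<in> path_image f \<Longrightarrow> \<bar>u z\<bar> \<le> 3*r \<and> \<bar>v z\<bar> < r/2 \<and>
        (r < \<bar>u z\<bar> \<or> (\<exists>k \<in> K \<inter> ball x0 (9*r/5). dist z k < \<delta>))"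
    using flat_horizontal_crossing[OF flat r n \<open>x0 \<in> K\<close> narrow \<delta>(1)] unfolding u_def v_def by blast
  define g where "g = linepath (x0 - r *\<^sub>R n) (x0 - (r/2) *\<^sub>R n) +++ reversepath \<gamma> +++
    linepath (x0 + (r/2) *\<^sub>R n) (x0 + r *\<^sub>R n)"
  have g: "path g" "v (pathstart g) = - r" "v (pathfinish g) = r"
    using \<gamma> uv_axis by (simp_all add: g_def)
  have segment_bounds: "min (u a) (u b) \<le> u y \<and> u y \<le> max (u a) (u b)"
      "min (v a) (v b) \<le> v y \<and> v y \<le> max (v a) (v b)"
    if "y \<in> closed_segment a b" for y a b
    using inner_closed_segment_between[OF that] unfolding u_def v_def by blast+
  have g_image: "\<bar>u z\<bar> < r \<and> \<bar>v z\<bar> \<le> r \<and> (r/2 \<le> \<bar>v z\<bar> \<or> z \<in> path_image \<gamma>)"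
    if z: "z \<in> path_image g" for z
  proof -
    consider "z \<in> closed_segment (x0 - r *\<^sub>R n) (x0 - (r/2) *\<^sub>R n)"
      | "z \<in> closed_segment (x0 + (r/2) *\<^sub>R n) (x0 + r *\<^sub>R n)" | "z \<in> path_image \<gamma>"
      using z \<gamma>(3,4) by (auto simp: g_def path_image_join)
    then show ?thesis
    proof cases
      case 3
      then have "norm (z - x0) < r"
        using \<gamma>(2) by (auto simp: dist_norm norm_minus_commute)
      then show ?thesis
        using 3 abs_inner_unit_le[of n "z - x0"] abs_inner_unit_le[of "perp n" "z - x0"] n
        by (simp add: u_def v_def)
    next
      case 1
      then have "u z = 0" "- r \<le> v z" "v z \<le> - r/2"
        using segment_bounds[OF 1] r by (simp_all add: uv_axis min_def max_def)
      then show ?thesis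
        using r by linarith
    next
      case 2
      then have "u z = 0" "r/2 \<le> v z" "v z \<le> r"
        using segment_bounds[OF 2] r by (simp_all add: uv_axis min_def max_def)
      then show ?thesis
        using r by linarith
    qed
  qed
  obtain z where z: "z \<in> path_image f" "z \<in> path_image g"
  proof (rule fashoda_frame[OF n f(1) g(1), of x0 "3*r" r])
    show "\<bar>(z - x0) \<bullet> perp n\<bar> \<le> 3*r \<and> \<bar>(z - x0) \<bullet> n\<bar> \<le> r"
      if "z \<in> path_image f \<union> path_image g" for z
      using that f(4)[of z] g_image[of z] r unfolding u_def v_def by auto
  qed (use f(2,3) g(2,3) in \<open>simp_all add: u_def v_def\<close>)
  then obtain k where "k \<in> K \<inter> ball x0 (9*r/5)" "dist z k < \<delta>" "z \<in> path_image \<gamma>"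
    using f(4)[OF z(1)] g_image[OF z(2)] by auto
  then show False
    using \<delta>(2)[of z k] r by auto
qed

lemma convex_Dplus: "convex (Dplus x r n t)"
proof -
  have "Dplus x r n t = ball x r \<inter> {z. n \<bullet> z > t + n \<bullet> x}"
    by (auto simp: Dplus_def inner_diff_left inner_commute[of n])
  then show ?thesis
    by (simp add: convex_Int convex_halfspace_gt)
qed

lemma convex_Dminus: "convex (Dminus x r n t)"
proof -
  have "Dminus x r n t = ball x r \<inter> {z. n \<bullet> z < n \<bullet> x - t}"
    by (auto simp: Dminus_def inner_diff_left inner_commute[of n])
  then show ?thesis
    by (simp add: convex_Int convex_halfspace_lt)
qed

lemma separatesI:
  assumes r: "0 < r" and beta: "beta F x r < 1/2" and "open (ball x r - F)"
    and no_path: "\<And>n. norm n = 1 \<Longrightarrow> dev F x r (line_normal x n) = beta F x r * r \<Longrightarrow>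
      \<not> path_component (ball x r - F) (x + (r/2) *\<^sub>R n) (x - (r/2) *\<^sub>R n)"
  shows "separates F x r"
  unfolding separates_def
proof (intro conjI allI impI)
  show "beta F x r \<le> 1/2"
    using beta by simp
  fix n assume "norm n = 1 \<and> dev F x r (line_normal x n) / r = beta F x r"
  then have n: "norm n = 1" and dev: "dev F x r (line_normal x n) = beta F x r * r"
    using r by (auto simp: field_simps)
  define U where "U = ball x r - F"
  define t where "t = beta F x r * r"
  define p where "p = x + (r/2) *\<^sub>R n"
  define q where "q = x - (r/2) *\<^sub>R n"
  have off_F: "\<bar>(z - x) \<bullet> n\<bar> \<le> t" if "z \<in> F \<inter> ball x r" for z
    using dist_line_le_dev[OF n that] dev by (simp add: t_def)
  have "Dplus x r n t \<subseteq> U" "Dminus x r n t \<subseteq> U"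
    using off_F by (fastforce simp: U_def Dplus_def Dminus_def)+
  moreover have "t < r/2"
    using beta r by (simp add: t_def)
  then have "p \<in> Dplus x r n t" "q \<in> Dminus x r n t"
    using n r norm_eq_1[of n] by (simp_all add: p_def q_def Dplus_def Dminus_def dist_norm)
  ultimately have components: "Dplus x r n t \<subseteq> connected_component_set U p"
      "Dminus x r n t \<subseteq> connected_component_set U q"
    by (simp_all add: connected_component_maximal convex_connected convex_Dplus convex_Dminus)
  have "connected_component_set U p \<noteq> connected_component_set U q"
  proof
    assume "connected_component_set U p = connected_component_set U q"
    then have "q \<in> connected_component_set U p"
      using \<open>q \<in> Dminus x r n t\<close> components(2) by blast
    then have "path_component U p q"
      using open_path_connected_component[OF \<open>open (ball x r - F)\<close>] by (simp add: U_def)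
    then show False
      using no_path[OF n dev] by (simp add: U_def p_def q_def)
  qed
  then show "\<exists>p q. Dplus x r n (beta F x r * r) \<subseteq> connected_component_set (ball x r - F) p \<and>
      Dminus x r n (beta F x r * r) \<subseteq> connected_component_set (ball x r - F) q \<and>
      connected_component_set (ball x r - F) p \<noteq> connected_component_set (ball x r - F) q"
    using components unfolding U_def t_def by blast
qed

lemma open_ball_Diff_closedin:
  assumes "closedin (top_of_set (ball x R)) K" "r \<le> R"
  shows "open (ball x r - K)"
proof -
  obtain C where "closed C" "K = ball x R \<inter> C"
    using assms(1) by (auto simp: closedin_closed)
  moreover have "ball x r - K = ball x r - C"
    using calculation(2) assms(2) by auto
  ultimately show ?thesis
    by (simp add: open_Diff)
qed

lemma closed_Int_cball_closedin:
  assumes "closedin (top_of_set (ball x R)) K" "s < R"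
  shows "closed (K \<inter> cball x s)"
proof -
  obtain C where "closed C" "K = ball x R \<inter> C"
    using assms(1) by (auto simp: closedin_closed)
  moreover have "K \<inter> cball x s = C \<inter> cball x s"
    using calculation(2) assms(2) by auto
  ultimately show ?thesis
    by (simp add: closed_Int)
qed

theorem lemma4p14:
  fixes x0 :: pt and r0 \<epsilon>0 :: real and K :: "pt set"
  assumes "r0 > 0" and "0 < \<epsilon>0" and "\<epsilon>0 < 1/100"
    and "K \<subseteq> ball x0 r0" and "closedin (top_of_set (ball x0 r0)) K" and "x0 \<in> K"
    and "\<And>x r. x \<in> K \<inter> ball x0 (r0/2) \<Longrightarrow> 0 < r \<Longrightarrow> r \<le> r0/2 \<Longrightarrow> beta_bil K x r \<le> \<epsilon>0"
  shows "separates K x0 (r0/10)"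
proof -
  define r where "r = r0/10"
  have r: "0 < r" "r0 = 10*r"
    using assms(1) by (simp_all add: r_def)
  have flat: "beta_bil K x \<rho> < 1/100" if "x \<in> K \<inter> ball x0 (5*r)" "0 < \<rho>" "\<rho> \<le> 5*r" for x \<rho>
    using assms(7)[of x \<rho>] assms(3) that r(2) by simp
  have beta: "beta K x0 r < 1/100"
    using beta_le_beta_bil[OF assms(6) r(1)] flat[of x0 r] assms(6) r(1) by simp
  show ?thesis
    unfolding r_def[symmetric]
  proof (rule separatesI[OF r(1) _ open_ball_Diff_closedin[OF assms(5)]])
    show "beta K x0 r < 1/2" "r \<le> r0"
      using beta r by simp_all
    fix n assume n: "norm n = 1" and "dev K x0 r (line_normal x0 n) = beta K x0 r * r"
    moreover have "beta K x0 r * r < 1/100 * r"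
      using beta r(1) by (rule mult_strict_right_mono)
    ultimately show "\<not> path_component (ball x0 r - K) (x0 + (r/2) *\<^sub>R n) (x0 - (r/2) *\<^sub>R n)"
      using flat_no_crossing[OF flat r(1) n assms(6) _ closed_Int_cball_closedin[OF assms(5)]] r
      by (auto simp: path_component_def)
  qed
qed

end
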